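(* Almost all finite simple graphs have a $Deg$-mate. That is, if $\mathcal{G}(n)$ denotes the set of isomorphism classes of simple graphs on $n$ vertices and $U_{Deg}(n)\subseteq \mathcal{G}(n)$ the set of those $G$ which are $Deg$-unique, then $\lim_{n\to\infty} |U_{Deg}(n)|/|\mathcal{G}(n)| = 0$.
   Context: All graphs are finite, simple (undirected, no loops, no parallel edges). For a graph $G=(V,E)$ and $v\in V$, $\deg(v)$ is the degree of $v$. The degree polynomial is $Deg(G;x)=\sum_{v\in V} x^{\deg(v)}$. For a graph polynomial $P$ (a map assigning to each graph a polynomial, invariant under isomorphism), a graph $H$ is a $P$-mate of $G$ if $P(G)=P(H)$ but $H$ is not isomorphic to $G$; $G$ is $P$-unique if it has no $P$-mate. "Almost all graphs" means the proportion of (isomorphism classes of) graphs of order $n$ with the property tends to $1$ as $n\to\infty$. *)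

theory Defs
  imports Complex_Main "HOL-Computational_Algebra.Polynomial"
begin

text \<open>A finite simple graph of order n is represented (up to isomorphism) by a
set of edges on the vertex set {0..<n}; each edge is a 2-element subset.\<close>

definition graphs :: "nat \<Rightarrow> nat set set set" where
  "graphs n = {E. E \<subseteq> {e. e \<subseteq> {..<n} \<and> card e = 2}}"

definition vdeg :: "nat set set \<Rightarrow> nat \<Rightarrow> nat" where
  "vdeg E v = card {e \<in> E. v \<in> e}"

definition deg_poly :: "nat \<Rightarrow> nat set set \<Rightarrow> int poly" where
  "deg_poly n E = (\<Sum>v<n. monom 1 (vdeg E v))"

definition graph_iso :: "nat \<Rightarrow> nat set set \<Rightarrow> nat \<Rightarrow> nat set set \<Rightarrow> bool" where
  "graph_iso n E m F \<longleftrightarrow> (\<exists>f. bij_betw f {..<n} {..<m} \<and> (\<lambda>e. f ` e) ` E = F)"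

definition deg_unique :: "nat \<Rightarrow> nat set set \<Rightarrow> bool" where
  "deg_unique n E \<longleftrightarrow>
     (\<forall>m F. F \<in> graphs m \<and> deg_poly m F = deg_poly n E \<longrightarrow> graph_iso n E m F)"

definition iso_classes :: "nat \<Rightarrow> nat set set set set" where
  "iso_classes n = {{F \<in> graphs n. graph_iso n E n F} | E. E \<in> graphs n}"

definition unique_classes :: "nat \<Rightarrow> nat set set set set" where
  "unique_classes n = {C \<in> iso_classes n. \<exists>E\<in>C. deg_unique n E}"

end

theory Submission
  imports Defs "HOL-Real_Asymp.Real_Asymp" "HOL-Library.FuncSet"
begin

text \<open>A Deg-unique graph is determined up to isomorphism by its vertex-labelled degree
  sequence, a map from n vertices to degrees in {0..n}; hence there are at most (n+1)^n
  Deg-unique classes. On the other hand each isomorphism class contains at most n^n of the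
  2^(n choose 2) labelled graphs, so there are at least 2^(n choose 2) / n^n classes, and
  (n+1)^n n^n / 2^(n choose 2) tends to 0.\<close>

definition iso_class :: "nat \<Rightarrow> nat set set \<Rightarrow> nat set set set" where
  "iso_class n E = {F \<in> graphs n. graph_iso n E n F}"

lemma iso_classes_eq_image: "iso_classes n = iso_class n ` graphs n"
  unfolding iso_classes_def iso_class_def by blast

lemma graphs_eq_Pow: "graphs n = Pow {e. e \<subseteq> {..<n} \<and> card e = 2}"
  unfolding graphs_def by blast

lemma finite_graphs: "finite (graphs n)"
proof -
  have "finite {e. e \<subseteq> {..<n} \<and> card e = 2}"
    by (rule finite_subset[of _ "Pow {..<n}"]) auto
  then show ?thesis
    by (simp add: graphs_eq_Pow)
qed

lemma card_graphs: "card (graphs n) = 2 ^ (n choose 2)"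
  using n_subsets[of "{..<n}" 2] finite_graphs unfolding graphs_eq_Pow by (simp add: card_Pow)

lemma graph_iso_refl: "graph_iso n E n E"
  unfolding graph_iso_def by (rule exI[of _ id]) auto

lemma graph_iso_sym:
  assumes "E \<in> graphs n" "graph_iso n E n F"
  shows "graph_iso n F n E"
proof -
  obtain f where f: "bij_betw f {..<n} {..<n}" and F: "(\<lambda>e. f ` e) ` E = F"
    using assms(2) unfolding graph_iso_def by blast
  let ?g = "inv_into {..<n} f"
  have "?g ` f ` e = e" if "e \<in> E" for e
    using that assms(1) bij_betw_imp_inj_on[OF f] unfolding graphs_def
    by (intro inv_into_image_cancel) auto
  then have "(\<lambda>e. ?g ` e) ` F = E"
    unfolding F[symmetric] image_image by simp
  then show ?thesis
    unfolding graph_iso_def using bij_betw_inv_into[OF f] by blast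
qed

lemma graph_iso_trans:
  assumes "graph_iso n E n F" "graph_iso n F n G"
  shows "graph_iso n E n G"
proof -
  obtain f where f: "bij_betw f {..<n} {..<n}" and F: "(\<lambda>e. f ` e) ` E = F"
    using assms(1) unfolding graph_iso_def by blast
  obtain g where g: "bij_betw g {..<n} {..<n}" and G: "(\<lambda>e. g ` e) ` F = G"
    using assms(2) unfolding graph_iso_def by blast
  have "(\<lambda>e. (g \<circ> f) ` e) ` E = G"
    using F G by (auto simp: image_comp)
  then show ?thesis
    unfolding graph_iso_def using bij_betw_trans[OF f g] by blast
qed

lemma iso_class_eq:
  assumes "E \<in> graphs n" "graph_iso n E n F"
  shows "iso_class n E = iso_class n F"
  using assms graph_iso_sym graph_iso_trans unfolding iso_class_def by blast

lemma iso_classes_subset_graphs: "C \<in> iso_classes n \<Longrightarrow> C \<subseteq> graphs n"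
  unfolding iso_classes_def by blast

lemma iso_class_of_mem:
  assumes "C \<in> iso_classes n" "E \<in> C"
  shows "C = iso_class n E"
  using assms iso_class_eq unfolding iso_classes_eq_image iso_class_def by blast

lemma card_iso_class_le:
  assumes "E \<in> graphs n"
  shows "card (iso_class n E) \<le> n ^ n"
proof -
  have "iso_class n E \<subseteq> (\<lambda>f. (\<lambda>e. f ` e) ` E) ` ({..<n} \<rightarrow>\<^sub>E {..<n})"
  proof
    fix F assume "F \<in> iso_class n E"
    then obtain f where f: "bij_betw f {..<n} {..<n}" and F: "(\<lambda>e. f ` e) ` E = F"
      unfolding iso_class_def graph_iso_def by blast
    have "restrict f {..<n} ` e = f ` e" if "e \<in> E" for e
      using that assms unfolding graphs_def by auto
    then have "(\<lambda>e. restrict f {..<n} ` e) ` E = F"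
      using F by (auto simp: image_iff)
    moreover have "restrict f {..<n} \<in> {..<n} \<rightarrow>\<^sub>E {..<n}"
      using bij_betw_apply[OF f] by auto
    ultimately show "F \<in> (\<lambda>f. (\<lambda>e. f ` e) ` E) ` ({..<n} \<rightarrow>\<^sub>E {..<n})"
      by blast
  qed
  then have "card (iso_class n E) \<le> card ((\<lambda>f. (\<lambda>e. f ` e) ` E) ` ({..<n} \<rightarrow>\<^sub>E {..<n}))"
    by (intro card_mono) (simp_all add: finite_PiE)
  also have "\<dots> \<le> card ({..<n} \<rightarrow>\<^sub>E ({..<n}::nat set))"
    by (intro card_image_le) (simp add: finite_PiE)
  finally show ?thesis
    by (simp add: card_PiE)
qed

lemma card_graphs_le_iso_classes: "2 ^ (n choose 2) \<le> card (iso_classes n) * n ^ n"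
proof -
  have "graphs n = \<Union>(iso_classes n)"
    unfolding iso_classes_eq_image iso_class_def using graph_iso_refl by blast
  then have "card (graphs n) \<le> (\<Sum>C\<in>iso_classes n. card C)"
    using card_Union_le_sum_card by metis
  also have "\<dots> \<le> card (iso_classes n) * n ^ n"
    using sum_bounded_above[of "iso_classes n" card "n ^ n"] card_iso_class_le
    unfolding iso_classes_eq_image by auto
  finally show ?thesis
    by (simp add: card_graphs)
qed

lemma vdeg_le:
  assumes "E \<in> graphs n"
  shows "vdeg E v \<le> n"
proof -
  have "{e \<in> E. v \<in> e} \<subseteq> (\<lambda>w. {v, w}) ` {..<n}"
  proof
    fix e assume e: "e \<in> {e \<in> E. v \<in> e}"
    then have "card (e - {v}) = 1" "e \<subseteq> {..<n}"
      using assms unfolding graphs_def by auto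
    obtain w where "e - {v} = {w}"
      using \<open>card (e - {v}) = 1\<close> by (rule card_1_singletonE)
    then have "e = {v, w}" "w \<in> {..<n}"
      using e \<open>e \<subseteq> {..<n}\<close> by auto
    then show "e \<in> (\<lambda>w. {v, w}) ` {..<n}"
      by blast
  qed
  then have "vdeg E v \<le> card ((\<lambda>w. {v, w}) ` {..<n})"
    unfolding vdeg_def by (intro card_mono) auto
  also have "\<dots> \<le> n"
    using card_image_le[of "{..<n}" "\<lambda>w. {v, w}"] by simp
  finally show ?thesis .
qed

lemma deg_poly_cong:
  assumes "\<And>v. v < n \<Longrightarrow> vdeg E v = vdeg F v"
  shows "deg_poly n E = deg_poly n F"
  unfolding deg_poly_def using assms by (intro sum.cong) auto

lemma card_unique_classes_le: "card (unique_classes n) \<le> (n + 1) ^ n"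
proof -
  let ?degs = "\<lambda>E. restrict (vdeg E) {..<n}"
  let ?represents = "\<lambda>C d. \<exists>E\<in>C. deg_unique n E \<and> d = ?degs E"
  have "card (unique_classes n) \<le> card ({..<n} \<rightarrow>\<^sub>E {..n})"
  proof (rule card_le_if_inj_on_rel[where r = ?represents])
    fix C assume "C \<in> unique_classes n"
    then obtain E where "C \<in> iso_classes n" "E \<in> C" "deg_unique n E"
      unfolding unique_classes_def by blast
    moreover have "E \<in> graphs n"
      using \<open>C \<in> iso_classes n\<close> \<open>E \<in> C\<close> iso_classes_subset_graphs by blast
    then have "?degs E \<in> {..<n} \<rightarrow>\<^sub>E {..n}"
      using vdeg_le by auto
    ultimately show "\<exists>d. d \<in> {..<n} \<rightarrow>\<^sub>E {..n} \<and> ?represents C d"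
      by blast
  next
    fix C1 C2 d
    assume C: "C1 \<in> unique_classes n" "C2 \<in> unique_classes n"
      and "?represents C1 d" "?represents C2 d"
    then obtain E1 E2 where E: "E1 \<in> C1" "E2 \<in> C2" "deg_unique n E1" "?degs E1 = ?degs E2"
      by metis
    have cls: "C1 \<in> iso_classes n" "C2 \<in> iso_classes n"
      using C unfolding unique_classes_def by auto
    have "E1 \<in> graphs n" "E2 \<in> graphs n"
      using cls E(1,2) iso_classes_subset_graphs by blast+
    moreover have "deg_poly n E2 = deg_poly n E1"
      using E(4) by (intro deg_poly_cong) (metis lessThan_iff restrict_apply')
    ultimately have "graph_iso n E1 n E2"
      using E(3) unfolding deg_unique_def by blast
    then have "iso_class n E1 = iso_class n E2"
      by (rule iso_class_eq[OF \<open>E1 \<in> graphs n\<close>])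
    then show "C1 = C2"
      using iso_class_of_mem[OF cls(1) E(1)] iso_class_of_mem[OF cls(2) E(2)] by simp
  qed (simp add: finite_PiE)
  then show ?thesis
    by (simp add: card_PiE)
qed

lemma real_choose_two: "real (n choose 2) = real n * (real n - 1) / 2"
  by (simp add: binomial_gbinomial gbinomial_pochhammer pochhammer_prod numeral_2_eq_2 field_simps)

lemma unique_classes_ratio_le:
  "real (card (unique_classes n)) / real (card (iso_classes n))
     \<le> (real n + 1) ^ n * real n ^ n / 2 ^ (n choose 2)"
proof -
  have "card (iso_classes n) > 0"
    using card_graphs_le_iso_classes[of n] by (cases "card (iso_classes n)") auto
  then have pos: "real (card (iso_classes n)) > 0"
    by simp
  have npos: "real n ^ n > 0"
    by (cases n) auto
  have lower: "2 ^ (n choose 2) \<le> real (card (iso_classes n)) * real n ^ n"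
    using card_graphs_le_iso_classes[of n] by (metis of_nat_le_iff of_nat_mult of_nat_numeral of_nat_power)
  have upper: "real (card (unique_classes n)) \<le> (real n + 1) ^ n"
    using card_unique_classes_le[of n] by (metis of_nat_1 of_nat_add of_nat_le_iff of_nat_power)
  have "real (card (unique_classes n)) / real (card (iso_classes n))
      \<le> (real n + 1) ^ n / real (card (iso_classes n))"
    using upper pos by (simp add: divide_right_mono)
  also have "\<dots> = (real n + 1) ^ n * real n ^ n / (real (card (iso_classes n)) * real n ^ n)"
    using npos by simp
  also have "\<dots> \<le> (real n + 1) ^ n * real n ^ n / 2 ^ (n choose 2)"
    using lower pos npos by (intro divide_left_mono) auto
  finally show ?thesis .
qed

theorem theorem1:
  shows "(\<lambda>n. real (card (unique_classes n)) / real (card (iso_classes n))) \<longlonglongrightarrow> 0"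
proof (rule tendsto_sandwich[OF _ _ tendsto_const])
  show "\<forall>\<^sub>F n in sequentially. 0 \<le> real (card (unique_classes n)) / real (card (iso_classes n))"
    by simp
  show "\<forall>\<^sub>F n in sequentially. real (card (unique_classes n)) / real (card (iso_classes n))
      \<le> (real n + 1) ^ n * real n ^ n / 2 ^ (n choose 2)"
    using unique_classes_ratio_le by simp
  have pow_choose2: "(2::real) ^ (n choose 2) = 2 powr (real n * (real n - 1) / 2)" for n
    by (metis powr_realpow real_choose_two zero_less_numeral)
  have "(\<lambda>n. (real n + 1) ^ n * real n ^ n / 2 powr (real n * (real n - 1) / 2)) \<longlonglongrightarrow> 0"
    by real_asymp
  then show "(\<lambda>n. (real n + 1) ^ n * real n ^ n / 2 ^ (n choose 2)) \<longlonglongrightarrow> 0"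
    by (simp only: pow_choose2)
qed

end
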